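(* Let $\ell$ and $m$ be positive integers with $2\le \ell\le m$, let $G$ be a torsion-free abelian group written multiplicatively, and let $\mathcal{A}=(A_1,\dots,A_m)$ be a sequence of nonempty finite subsets of $G$. Put $A=A_1\cup\cdots\cup A_m$. Then \[ |\Pi^{\ell}(\mathcal{A})| \ \ge\ \sum_{a\in A}\mu_{\mathcal{A}}(a)-\ell+1, \] and this lower bound is best possible (there exist such sequences for which equality holds).
   Context: For $S\subseteq G$, $\chi_S$ is the indicator function of $S$. For $a\in A$, $\mu_{\mathcal{A}}(a)=\min\big(\ell,\sum_{j=1}^m\chi_{A_j}(a)\big)$. $\Pi^{\ell}(\mathcal{A})$ is the set of all products $a_{i_1}\cdots a_{i_\ell}$ with $i_1,\dots,i_\ell\in[1,m]$ pairwise distinct and $a_{i_j}\in A_{i_j}$ (since $G$ is abelian, the order is irrelevant). $[x,y]=\{n\in\mathbb{Z}:x\le n\le y\}$. *)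

theory Defs
  imports "HOL-Algebra.Algebra"
begin

definition torsion_free :: "('a, 'b) monoid_scheme \<Rightarrow> bool" where
  "torsion_free G \<longleftrightarrow>
     (\<forall>x\<in>carrier G. \<forall>n::nat. n > 0 \<longrightarrow> x [^]\<^bsub>G\<^esub> n = \<one>\<^bsub>G\<^esub> \<longrightarrow> x = \<one>\<^bsub>G\<^esub>)"

text \<open>Restricted products: products a_{i_1} ... a_{i_l} with pairwise distinct indices
  i_1,...,i_l in [1,m] and a_{i_j} in A_{i_j}.  Since G is abelian, such a product is
  determined by the index set I = {i_1,...,i_l} and the choice function on I.\<close>
definition restricted_products ::
  "('a, 'b) monoid_scheme \<Rightarrow> nat \<Rightarrow> nat \<Rightarrow> (nat \<Rightarrow> 'a set) \<Rightarrow> 'a set" where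
  "restricted_products G l m A =
     {finprod G a I | I a. I \<subseteq> {1..m} \<and> card I = l \<and> (\<forall>i\<in>I. a i \<in> A i)}"

definition mult_mu :: "nat \<Rightarrow> nat \<Rightarrow> (nat \<Rightarrow> 'a set) \<Rightarrow> 'a \<Rightarrow> nat" where
  "mult_mu l m A x = min l (card {j \<in> {1..m}. x \<in> A j})"

definition admissible_seq :: "('a, 'b) monoid_scheme \<Rightarrow> nat \<Rightarrow> (nat \<Rightarrow> 'a set) \<Rightarrow> bool" where
  "admissible_seq G m A \<longleftrightarrow> (\<forall>j\<in>{1..m}. A j \<noteq> {} \<and> finite (A j) \<and> A j \<subseteq> carrier G)"

end

theory Submission
  imports Defs
begin

(* A torsion-free abelian group can be totally ordered compatibly with multiplication: by Zorn's
   lemma there is a maximal subsemigroup M avoiding 1, and torsion-freeness forces x or x^-1 into M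
   for every x /= 1.

   The bound is proved more generally for families in which some sets may be empty, as long as at
   least l of them are nonempty, by induction on the total size of the family. If exactly l sets are
   nonempty and all of them are singletons, both sides are trivial. Otherwise delete from some A_j
   its greatest element x, where x is chosen greatest in the whole union unless exactly l sets are
   nonempty (then A_j is any set with at least two elements). This lowers the sum of the mu(a) by at
   most one, and only if x lies in at most l of the sets. In that case take the greatest restricted
   product of the smaller family: exchanging one of its factors for x (the factor from A_j, or else
   a factor different from x) gives a strictly larger restricted product of the original family, so
   the deletion loses at least one restricted product. Equality holds for the constant family
   A_i = {1}. *)

section \<open>Orders on torsion-free abelian groups\<close>

definition strict_cone :: "('a, 'b) monoid_scheme \<Rightarrow> 'a set \<Rightarrow> bool"
  where "strict_cone G M \<longleftrightarrow> M \<subseteq> carrier G \<and> (\<forall>x\<in>M. \<forall>y\<in>M. x \<otimes>\<^bsub>G\<^esub> y \<in> M) \<and> \<one>\<^bsub>G\<^esub> \<notin> M"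

locale ordered_comm_group = comm_group +
  fixes P :: "'a set"
  assumes cone: "strict_cone G P"
    and cone_total: "x \<in> carrier G \<Longrightarrow> x \<noteq> \<one> \<Longrightarrow> x \<in> P \<or> inv x \<in> P"

lemma (in monoid) subsemigroup_nat_pow_closed:
  assumes "\<forall>x\<in>M. \<forall>y\<in>M. x \<otimes> y \<in> M" "M \<subseteq> carrier G" "p \<in> M" "0 < n"
  shows "p [^] (n::nat) \<in> M"
  using \<open>0 < n\<close>
proof (induction n rule: nat_induct_non_zero)
  case 1
  show ?case using assms by auto
next
  case (Suc n)
  then show ?case using assms by auto
qed

lemma (in comm_monoid) adjoin_to_subsemigroup:
  assumes closed: "\<forall>x\<in>M. \<forall>y\<in>M. x \<otimes> y \<in> M"
    and M: "M \<subseteq> carrier G" and z: "z \<in> carrier G"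
  defines "Q \<equiv> {p \<otimes> z [^] (n::nat) | p n. p \<in> insert \<one> M \<and> (p \<in> M \<or> 0 < n)}"
  shows "Q \<subseteq> carrier G" and "\<forall>x\<in>Q. \<forall>y\<in>Q. x \<otimes> y \<in> Q" and "M \<subseteq> Q" and "z \<in> Q"
proof -
  show "Q \<subseteq> carrier G"
    unfolding Q_def using M z by auto
  show "\<forall>x\<in>Q. \<forall>y\<in>Q. x \<otimes> y \<in> Q"
  proof (intro ballI)
    fix x y assume "x \<in> Q" "y \<in> Q"
    then obtain p n q k where x: "x = p \<otimes> z [^] (n::nat)" "p \<in> insert \<one> M" "p \<in> M \<or> 0 < n"
      and y: "y = q \<otimes> z [^] (k::nat)" "q \<in> insert \<one> M" "q \<in> M \<or> 0 < k"
      unfolding Q_def by blast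
    have pq: "p \<in> carrier G" "q \<in> carrier G"
      using x(2) y(2) M by auto
    have "x \<otimes> y = (p \<otimes> q) \<otimes> z [^] (n + k)"
      using pq z x(1) y(1) by (simp add: m_ac nat_pow_mult[symmetric])
    moreover have "p \<otimes> q \<in> insert \<one> M" "p \<otimes> q \<in> M \<or> 0 < n + k"
      using x(2,3) y(2,3) closed pq by auto
    ultimately show "x \<otimes> y \<in> Q"
      unfolding Q_def by blast
  qed
  show "M \<subseteq> Q"
  proof
    fix p assume "p \<in> M"
    then have "p = p \<otimes> z [^] (0::nat)"
      using M by auto
    with \<open>p \<in> M\<close> show "p \<in> Q"
      unfolding Q_def by blast
  qed
  have "\<exists>p n. z = p \<otimes> z [^] (n::nat) \<and> p \<in> insert \<one> M \<and> (p \<in> M \<or> 0 < n)"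
    using z by (intro exI[of _ \<one>] exI[of _ "1::nat"]) simp
  then show "z \<in> Q"
    unfolding Q_def by simp
qed

lemma (in comm_group) maximal_strict_cone_relation:
  assumes "torsion_free G" and M: "strict_cone G M"
    and maximal: "\<And>Q. strict_cone G Q \<Longrightarrow> M \<subseteq> Q \<Longrightarrow> Q = M"
    and z: "z \<in> carrier G" "z \<notin> M" "z \<noteq> \<one>"
  shows "\<exists>p\<in>M. \<exists>n>0. p \<otimes> z [^] (n::nat) = \<one>"
proof -
  have closed: "\<forall>x\<in>M. \<forall>y\<in>M. x \<otimes> y \<in> M" and carrier: "M \<subseteq> carrier G" and one: "\<one> \<notin> M"
    using M unfolding strict_cone_def by auto
  define Q where "Q = {p \<otimes> z [^] (n::nat) | p n. p \<in> insert \<one> M \<and> (p \<in> M \<or> 0 < n)}"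
  note Q = adjoin_to_subsemigroup[OF closed carrier z(1), folded Q_def]
  have "\<one> \<in> Q"
    using maximal[of Q] Q z(2) unfolding strict_cone_def by blast
  then obtain p n where p: "\<one> = p \<otimes> z [^] (n::nat)" "p \<in> insert \<one> M" "p \<in> M \<or> 0 < n"
    unfolding Q_def by blast
  show ?thesis
  proof (cases "p = \<one>")
    case True
    then have "z [^] n = \<one>" "0 < n"
      using p one z(1) by auto
    then show ?thesis
      using \<open>torsion_free G\<close> z unfolding torsion_free_def by blast
  next
    case False
    then have "p \<in> M"
      using p(2) by blast
    moreover have "0 < n"
      using p(1) \<open>p \<in> M\<close> carrier one by (cases n) auto
    ultimately show ?thesis
      using p(1) by auto
  qed
qed

lemma (in comm_group) maximal_strict_cone_total:
  assumes "torsion_free G" and M: "strict_cone G M"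
    and maximal: "\<And>Q. strict_cone G Q \<Longrightarrow> M \<subseteq> Q \<Longrightarrow> Q = M"
    and x: "x \<in> carrier G" "x \<noteq> \<one>"
  shows "x \<in> M \<or> inv x \<in> M"
proof (rule ccontr)
  have closed: "\<forall>x\<in>M. \<forall>y\<in>M. x \<otimes> y \<in> M" and carrier: "M \<subseteq> carrier G" and one: "\<one> \<notin> M"
    using M unfolding strict_cone_def by auto
  assume "\<not> (x \<in> M \<or> inv x \<in> M)"
  then obtain p n q k where p: "p \<in> M" "0 < n" "p \<otimes> x [^] (n::nat) = \<one>"
    and q: "q \<in> M" "0 < k" "q \<otimes> inv x [^] (k::nat) = \<one>"
    using maximal_strict_cone_relation[OF assms(1,2) maximal] x by (metis inv_closed inv_eq_1_iff)
  have pq: "p \<in> carrier G" "q \<in> carrier G"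
    using p(1) q(1) carrier by auto
  \<comment> \<open>Raising the two relations to the powers \<open>k\<close> and \<open>n\<close> cancels \<open>x\<close>.\<close>
  have px: "p [^] k \<otimes> x [^] (n * k) = \<one>"
    using arg_cong[OF p(3), of "\<lambda>y. y [^] k"] pq x by (simp add: nat_pow_distrib nat_pow_pow)
  have qx: "q [^] n \<otimes> inv x [^] (n * k) = \<one>"
    using arg_cong[OF q(3), of "\<lambda>y. y [^] n"] pq x
    by (simp add: nat_pow_distrib nat_pow_pow mult.commute)
  have "x [^] (n * k) \<otimes> inv x [^] (n * k) = \<one>"
    using x by (simp add: nat_pow_distrib[symmetric])
  then have "p [^] k \<otimes> q [^] n = (p [^] k \<otimes> x [^] (n * k)) \<otimes> (q [^] n \<otimes> inv x [^] (n * k))"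
    using pq x by (simp add: m_ac)
  also have "\<dots> = \<one>"
    using px qx by simp
  finally have "p [^] k \<otimes> q [^] n = \<one>" .
  moreover have "p [^] k \<otimes> q [^] n \<in> M"
    using subsemigroup_nat_pow_closed[OF closed carrier] p q closed by blast
  ultimately show False
    using one by simp
qed

lemma (in comm_group) torsion_free_imp_ordered:
  assumes "torsion_free G"
  shows "\<exists>P. ordered_comm_group G P"
proof -
  have "\<Union>C \<in> Collect (strict_cone G)" if C: "C \<in> chains (Collect (strict_cone G))" for C
  proof -
    have "x \<otimes> y \<in> \<Union>C" if "x \<in> \<Union>C" "y \<in> \<Union>C" for x y
    proof -
      obtain S T where "S \<in> C" "T \<in> C" "x \<in> S" "y \<in> T"
        using \<open>x \<in> \<Union>C\<close> \<open>y \<in> \<Union>C\<close> by blast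
      moreover have "S \<subseteq> T \<or> T \<subseteq> S"
        using chainsD[OF C \<open>S \<in> C\<close> \<open>T \<in> C\<close>] .
      ultimately show ?thesis
        using chainsD2[OF C] unfolding strict_cone_def by blast
    qed
    then show ?thesis
      using chainsD2[OF C] unfolding strict_cone_def by blast
  qed
  then obtain M where M: "strict_cone G M" and maximal: "\<And>Q. strict_cone G Q \<Longrightarrow> M \<subseteq> Q \<Longrightarrow> Q = M"
    using Zorn_Lemma[of "Collect (strict_cone G)"] by blast
  have "ordered_comm_group G M"
  proof unfold_locales
    show "x \<in> M \<or> inv x \<in> M" if "x \<in> carrier G" "x \<noteq> \<one>" for x
      using maximal that by (rule maximal_strict_cone_total[OF assms M])
  qed (fact M)
  then show ?thesis ..
qed

context ordered_comm_group
begin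

definition gless :: "'a \<Rightarrow> 'a \<Rightarrow> bool" (infix "\<lessdot>" 50)
  where "a \<lessdot> b \<longleftrightarrow> b \<otimes> inv a \<in> P"

lemma gless_irrefl: "a \<in> carrier G \<Longrightarrow> \<not> a \<lessdot> a"
  unfolding gless_def using cone by (simp add: strict_cone_def)

lemma gless_trans:
  assumes "a \<in> carrier G" "b \<in> carrier G" "c \<in> carrier G" "a \<lessdot> b" "b \<lessdot> c"
  shows "a \<lessdot> c"
proof -
  have "c \<otimes> inv a = (c \<otimes> inv b) \<otimes> (b \<otimes> inv a)"
    using assms(1-3) by (simp add: m_assoc[symmetric]) (simp add: m_assoc)
  then show ?thesis
    using assms(4,5) cone unfolding gless_def strict_cone_def by simp
qed

lemma gless_asym: "a \<in> carrier G \<Longrightarrow> b \<in> carrier G \<Longrightarrow> a \<lessdot> b \<Longrightarrow> \<not> b \<lessdot> a"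
  using gless_trans gless_irrefl by blast

lemma gless_linear:
  assumes "a \<in> carrier G" "b \<in> carrier G" "a \<noteq> b"
  shows "a \<lessdot> b \<or> b \<lessdot> a"
proof -
  have "b \<otimes> inv a \<noteq> \<one>"
    using assms inv_solve_right'[of \<one> b a] by simp
  moreover have "inv (b \<otimes> inv a) = a \<otimes> inv b"
    using assms by (simp add: inv_mult_group m_comm)
  ultimately show ?thesis
    using cone_total[of "b \<otimes> inv a"] assms unfolding gless_def by auto
qed

lemma gless_mult_right:
  assumes "a \<in> carrier G" "b \<in> carrier G" "c \<in> carrier G" "a \<lessdot> b"
  shows "a \<otimes> c \<lessdot> b \<otimes> c"
proof -
  have "(b \<otimes> c) \<otimes> inv (a \<otimes> c) = b \<otimes> inv a"
    using assms by (simp add: inv_mult_group m_assoc m_comm m_lcomm)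
  then show ?thesis
    using assms(4) unfolding gless_def by simp
qed

definition is_greatest :: "'a set \<Rightarrow> 'a \<Rightarrow> bool"
  where "is_greatest S x \<longleftrightarrow> x \<in> S \<and> (\<forall>y\<in>S. y \<noteq> x \<longrightarrow> y \<lessdot> x)"

lemma finite_has_greatest:
  assumes "finite S" "S \<noteq> {}" "S \<subseteq> carrier G"
  shows "\<exists>x. is_greatest S x"
  using assms unfolding is_greatest_def
proof (induction S rule: finite_ne_induct)
  case (singleton x)
  then show ?case by simp
next
  case (insert x S)
  then obtain p where p: "p \<in> S" "\<forall>q\<in>S. q \<noteq> p \<longrightarrow> q \<lessdot> p"
    by auto
  show ?case
  proof (cases "p \<lessdot> x")
    case True
    have "q \<lessdot> x" if "q \<in> S" for q
    proof (cases "q = p")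
      case False
      then show ?thesis
        using that p True gless_trans[of q p x] insert.prems by auto
    qed (use True in simp)
    then show ?thesis
      by blast
  next
    case False
    then have "x = p \<or> x \<lessdot> p"
      using gless_linear[of x p] p(1) insert.prems by auto
    then show ?thesis
      using p by blast
  qed
qed

lemma is_greatest_not_gless:
  assumes "is_greatest S p" "S \<subseteq> carrier G" "q \<in> S"
  shows "\<not> p \<lessdot> q"
proof (cases "q = p")
  case False
  then have "q \<lessdot> p"
    using assms(1,3) unfolding is_greatest_def by blast
  then show ?thesis
    using gless_asym assms unfolding is_greatest_def by blast
qed (use gless_irrefl assms in blast)

lemma finprod_exchange_gless:
  assumes "finite I" "i \<in> I" "j \<notin> I - {i}" "a \<in> I \<rightarrow> carrier G" "x \<in> carrier G" "a i \<lessdot> x"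
  shows "finprod G a I \<lessdot> finprod G (a(j := x)) (insert j (I - {i}))"
proof -
  have rest: "a \<in> I - {i} \<rightarrow> carrier G"
    using assms(4) by auto
  have "finprod G a I = finprod G a (insert i (I - {i}))"
    using assms(2) by (simp add: insert_absorb)
  also have "\<dots> = a i \<otimes> finprod G a (I - {i})"
    using assms(1,2,4) rest by (intro finprod_insert) auto
  finally have old: "finprod G a I = a i \<otimes> finprod G a (I - {i})" .
  have "finprod G (a(j := x)) (I - {i}) = finprod G a (I - {i})"
    using assms(3) rest by (intro finprod_cong') auto
  then have new: "finprod G (a(j := x)) (insert j (I - {i})) = x \<otimes> finprod G a (I - {i})"
    using assms(1,3,5) rest finprod_insert[of "I - {i}" j "a(j := x)"] by (simp add: Pi_def)
  show ?thesis
    unfolding old new using assms(2,4,5,6) rest by (intro gless_mult_right) auto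
qed

end

section \<open>Restricted products\<close>

abbreviation nonempty_indices :: "nat \<Rightarrow> (nat \<Rightarrow> 'a set) \<Rightarrow> nat set"
  where "nonempty_indices m A \<equiv> {i \<in> {1..m}. A i \<noteq> {}}"

lemma card_nonempty_indices_remove:
  "card (nonempty_indices m A) - 1 \<le> card (nonempty_indices m (A(j := A j - {x})))"
proof -
  have "card (nonempty_indices m A) - 1 \<le> card (nonempty_indices m A - {j})"
    using diff_card_le_card_Diff[of "{j}"] by simp
  also have "\<dots> \<le> card (nonempty_indices m (A(j := A j - {x})))"
    by (intro card_mono) auto
  finally show ?thesis .
qed

lemma restricted_products_mono:
  assumes "\<And>i. i \<in> {1..m} \<Longrightarrow> B i \<subseteq> A i"
  shows "restricted_products G l m B \<subseteq> restricted_products G l m A"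
  using assms unfolding restricted_products_def by blast

lemma restricted_products_nonempty:
  assumes "l \<le> card (nonempty_indices m A)"
  shows "restricted_products G l m A \<noteq> {}"
proof -
  obtain I where I: "I \<subseteq> nonempty_indices m A" "card I = l"
    using obtain_subset_with_card_n[OF assms] by blast
  then have "\<forall>i\<in>I. (SOME y. y \<in> A i) \<in> A i"
    by (auto simp: some_in_eq)
  then have "finprod G (\<lambda>i. SOME y. y \<in> A i) I \<in> restricted_products G l m A"
    unfolding restricted_products_def using I by blast
  then show ?thesis
    by blast
qed

lemma (in comm_monoid) restricted_products_subset_carrier:
  assumes "\<And>i. i \<in> {1..m} \<Longrightarrow> A i \<subseteq> carrier G"
  shows "restricted_products G l m A \<subseteq> carrier G"
proof
  fix y assume "y \<in> restricted_products G l m A"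
  then obtain I a where "y = finprod G a I" "I \<subseteq> {1..m}" "\<forall>i\<in>I. a i \<in> A i"
    unfolding restricted_products_def by blast
  then have "a \<in> I \<rightarrow> carrier G"
    using assms by (intro funcsetI) blast
  then show "y \<in> carrier G"
    using \<open>y = finprod G a I\<close> by simp
qed

lemma (in comm_monoid) finite_restricted_products:
  assumes "\<And>i. i \<in> {1..m} \<Longrightarrow> finite (A i)" "\<And>i. i \<in> {1..m} \<Longrightarrow> A i \<subseteq> carrier G"
  shows "finite (restricted_products G l m A)"
proof -
  have "restricted_products G l m A \<subseteq> (\<lambda>(I, a). finprod G a I) ` (SIGMA I:Pow {1..m}. PiE I A)"
  proof
    fix y assume "y \<in> restricted_products G l m A"
    then obtain I a where y: "y = finprod G a I" "I \<subseteq> {1..m}" "\<forall>i\<in>I. a i \<in> A i"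
      unfolding restricted_products_def by blast
    have "a \<in> I \<rightarrow> carrier G"
      using y(2,3) assms(2) by (intro funcsetI) blast
    then have "y = finprod G (restrict a I) I"
      unfolding y(1) by (intro finprod_cong') auto
    moreover have "(I, restrict a I) \<in> (SIGMA I:Pow {1..m}. PiE I A)"
      using y by auto
    ultimately show "y \<in> (\<lambda>(I, a). finprod G a I) ` (SIGMA I:Pow {1..m}. PiE I A)"
      by force
  qed
  moreover have "finite (SIGMA I:Pow {1..m}. PiE I A)"
    using assms(1) by (intro finite_SigmaI finite_PiE) (auto dest: finite_subset)
  ultimately show ?thesis
    using finite_surj by blast
qed

lemma exchange_in_restricted_products:
  assumes "I \<subseteq> {1..m}" "card I = l" "\<And>k. k \<in> I \<Longrightarrow> a k \<in> A k"
    and "i \<in> I" "j \<in> {1..m}" "j \<notin> I - {i}" "x \<in> A j"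
  shows "finprod G (a(j := x)) (insert j (I - {i})) \<in> restricted_products G l m A"
proof -
  have "finite I"
    using assms(1) finite_subset by blast
  moreover have "0 < l"
    using assms(2,4) \<open>finite I\<close> card_gt_0_iff by blast
  ultimately have "card (insert j (I - {i})) = l"
    using assms(2,4,6) by (simp add: card.insert_remove)
  moreover have "insert j (I - {i}) \<subseteq> {1..m}"
    using assms(1,5) by blast
  moreover have "\<forall>k\<in>insert j (I - {i}). (a(j := x)) k \<in> A k"
    using assms(3,7) by auto
  ultimately show ?thesis
    unfolding restricted_products_def by blast
qed

lemma (in comm_monoid) restricted_products_const_singleton:
  assumes "e \<in> carrier G" "l \<le> m"
  shows "restricted_products G l m (\<lambda>i. {e}) = {e [^] l}"
proof
  show "restricted_products G l m (\<lambda>i. {e}) \<subseteq> {e [^] l}"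
  proof
    fix y assume "y \<in> restricted_products G l m (\<lambda>i. {e})"
    then obtain I :: "nat set" and a where y: "y = finprod G a I" "card I = l" "\<forall>i\<in>I. a i = e"
      unfolding restricted_products_def by blast
    then have "y = finprod G (\<lambda>i. e) I"
      using assms(1) by (auto intro: finprod_cong')
    then show "y \<in> {e [^] l}"
      using y(2) assms(1) by (simp add: finprod_const)
  qed
  have "finprod G (\<lambda>i. e) {1..l} \<in> restricted_products G l m (\<lambda>i. {e})"
    unfolding restricted_products_def using assms(2) by force
  then show "{e [^] l} \<subseteq> restricted_products G l m (\<lambda>i. {e})"
    using assms(1) by (simp add: finprod_const)
qed

lemma sum_card_le_card_nonempty_indices:
  assumes "\<And>i. i \<in> {1..m} \<Longrightarrow> card (A i) \<le> 1"
  shows "(\<Sum>i\<in>{1..m}. card (A i)) \<le> card (nonempty_indices m A)"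
proof -
  have "(\<Sum>i\<in>{1..m}. card (A i)) \<le> (\<Sum>i\<in>{1..m}. if A i \<noteq> {} then 1 else 0)"
    using assms by (intro sum_mono) auto
  then show ?thesis
    by (simp add: sum.If_cases Int_def)
qed

lemma sum_card_remove_less:
  fixes m :: nat
  assumes "\<And>i. i \<in> {1..m} \<Longrightarrow> finite (A i)" "j \<in> {1..m}" "x \<in> A j"
  shows "(\<Sum>i\<in>{1..m}. card ((A(j := A j - {x})) i)) < (\<Sum>i\<in>{1..m}. card (A i))"
proof (rule sum_strict_mono_ex1)
  show "\<forall>i\<in>{1..m}. card ((A(j := A j - {x})) i) \<le> card (A i)"
    using assms(1) by (auto intro: card_mono)
  have "0 < card (A j)"
    using assms card_gt_0_iff by blast
  then show "\<exists>i\<in>{1..m}. card ((A(j := A j - {x})) i) < card (A i)"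
    using assms by (intro bexI[of _ j]) auto
qed simp

lemma sum_mult_mu_le_sum_card:
  assumes "\<And>i. i \<in> {1..m} \<Longrightarrow> finite (A i)"
  shows "(\<Sum>x\<in>(\<Union>i\<in>{1..m}. A i). mult_mu l m A x) \<le> (\<Sum>i\<in>{1..m}. card (A i))"
proof -
  let ?U = "\<Union>i\<in>{1..m}. A i"
  have "(\<Sum>x\<in>?U. mult_mu l m A x) \<le> (\<Sum>x\<in>?U. card {i \<in> {1..m}. x \<in> A i})"
    unfolding mult_mu_def by (intro sum_mono) simp
  also have "\<dots> = (\<Sum>i\<in>{1..m}. card (A i))"
  proof (rule sum_multicount_gen)
    show "\<forall>i\<in>{1..m}. card {x \<in> ?U. x \<in> A i} = card (A i)"
      by (auto intro!: arg_cong[where f = card])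
  qed (use assms in auto)
  finally show ?thesis .
qed

lemma sum_mult_mu_const_singleton:
  assumes "0 < m" "l \<le> m"
  shows "(\<Sum>x\<in>(\<Union>j\<in>{1..m}. {e}). mult_mu l m (\<lambda>j. {e}) x) = l"
proof -
  have "{j \<in> {1..m}. e \<in> {e}} = {1..m}"
    by blast
  then show ?thesis
    using assms unfolding mult_mu_def by simp
qed

lemma mult_mu_remove_occurrence:
  assumes "j \<in> {1..m}" "x \<in> A j"
  shows "mult_mu l m A y
           \<le> mult_mu l m (A(j := A j - {x})) y
             + (if y = x \<and> card {i \<in> {1..m}. x \<in> A i} \<le> l then 1 else 0)"
proof (cases "y = x")
  case True
  let ?S = "{i \<in> {1..m}. x \<in> A i}"
  have "{i \<in> {1..m}. x \<in> (A(j := A j - {x})) i} = ?S - {j}"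
    by auto
  moreover have "j \<in> ?S"
    using assms by simp
  then have "card (?S - {j}) = card ?S - 1" "0 < card ?S"
    by (auto simp: card_gt_0_iff)
  ultimately show ?thesis
    unfolding mult_mu_def True by auto
next
  case False
  then have "{i \<in> {1..m}. y \<in> (A(j := A j - {x})) i} = {i \<in> {1..m}. y \<in> A i}"
    by auto
  then show ?thesis
    unfolding mult_mu_def using False by simp
qed

lemma sum_mult_mu_remove_occurrence:
  assumes "\<And>i. i \<in> {1..m} \<Longrightarrow> finite (A i)" "j \<in> {1..m}" "x \<in> A j"
  defines "B \<equiv> A(j := A j - {x})"
  shows "(\<Sum>y\<in>(\<Union>i\<in>{1..m}. A i). mult_mu l m A y)
           \<le> (\<Sum>y\<in>(\<Union>i\<in>{1..m}. B i). mult_mu l m B y)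
             + (if card {i \<in> {1..m}. x \<in> A i} \<le> l then 1 else 0)"
proof -
  let ?U = "\<Union>i\<in>{1..m}. A i" and ?c = "card {i \<in> {1..m}. x \<in> A i}"
  have U: "finite ?U" "x \<in> ?U"
    using assms(1-3) by auto
  have "(\<Sum>y\<in>?U. mult_mu l m A y)
          \<le> (\<Sum>y\<in>?U. mult_mu l m B y + (if y = x \<and> ?c \<le> l then 1 else 0))"
    unfolding B_def using assms(2,3) by (intro sum_mono mult_mu_remove_occurrence)
  also have "\<dots> = (\<Sum>y\<in>?U. mult_mu l m B y) + (if ?c \<le> l then 1 else 0)"
    using U by (simp add: sum.distrib)
  also have "(\<Sum>y\<in>?U. mult_mu l m B y) = (\<Sum>y\<in>(\<Union>i\<in>{1..m}. B i). mult_mu l m B y)"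
  proof (rule sum.mono_neutral_right)
    show "\<forall>y\<in>?U - (\<Union>i\<in>{1..m}. B i). mult_mu l m B y = 0"
    proof
      fix y assume "y \<in> ?U - (\<Union>i\<in>{1..m}. B i)"
      then have "{i \<in> {1..m}. y \<in> B i} = {}"
        by blast
      then show "mult_mu l m B y = 0"
        unfolding mult_mu_def by (simp only: card.empty min_0R)
    qed
  qed (use U(1) in \<open>auto simp: B_def\<close>)
  finally show ?thesis .
qed

section \<open>The lower bound\<close>

context ordered_comm_group
begin

lemma obtain_greatest_occurrence:
  fixes m :: nat
  assumes fin: "\<And>i. i \<in> {1..m} \<Longrightarrow> finite (A i)"
    and car: "\<And>i. i \<in> {1..m} \<Longrightarrow> A i \<subseteq> carrier G"
    and enough: "l \<le> card (nonempty_indices m A)"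
    and reducible: "l < card (nonempty_indices m A) \<or> (\<exists>j\<in>{1..m}. 2 \<le> card (A j))"
  obtains j x where "j \<in> {1..m}" "is_greatest (A j) x"
    and "l < card (nonempty_indices m A) \<Longrightarrow> is_greatest (\<Union>i\<in>{1..m}. A i) x"
    and "l \<le> card (nonempty_indices m (A(j := A j - {x})))"
proof (cases "l < card (nonempty_indices m A)")
  case True
  let ?U = "\<Union>i\<in>{1..m}. A i"
  have "0 < card (nonempty_indices m A)"
    using True by linarith
  then have "nonempty_indices m A \<noteq> {}"
    using card_gt_0_iff by blast
  then obtain i where "i \<in> {1..m}" "A i \<noteq> {}"
    by blast
  then have "?U \<noteq> {}"
    by blast
  moreover have "finite ?U"
    using fin by (intro finite_UN_I finite_atLeastAtMost)
  moreover have "?U \<subseteq> carrier G"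
    using car by blast
  ultimately obtain x where x: "is_greatest ?U x"
    using finite_has_greatest by blast
  then obtain j where j: "j \<in> {1..m}" "x \<in> A j"
    unfolding is_greatest_def by blast
  show ?thesis
  proof (rule that[OF j(1)])
    show "is_greatest (A j) x"
      using x j unfolding is_greatest_def by blast
    show "is_greatest (\<Union>i\<in>{1..m}. A i) x"
      by (fact x)
    show "l \<le> card (nonempty_indices m (A(j := A j - {x})))"
      using True card_nonempty_indices_remove[of m A j x] by linarith
  qed
next
  case False
  then obtain j where j: "j \<in> {1..m}" "2 \<le> card (A j)"
    using reducible by blast
  then have "A j \<noteq> {}"
    by auto
  then obtain x where x: "is_greatest (A j) x"
    using finite_has_greatest[of "A j"] fin[OF j(1)] car[OF j(1)] by blast
  have "A j - {x} \<noteq> {}"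
  proof
    assume "A j - {x} = {}"
    then have "card (A j) \<le> card {x}"
      by (intro card_mono) auto
    with j(2) show False
      by simp
  qed
  then have "nonempty_indices m (A(j := A j - {x})) = nonempty_indices m A"
    by auto
  then show ?thesis
    using that[OF j(1) x] False enough by simp
qed

lemma obtain_exchangeable_index:
  fixes m :: nat
  assumes j: "j \<in> {1..m}" "is_greatest (A j) x"
    and greatest: "l < card (nonempty_indices m A) \<Longrightarrow> is_greatest (\<Union>i\<in>{1..m}. A i) x"
    and rare: "card {i \<in> {1..m}. x \<in> A i} \<le> l"
    and I: "I \<subseteq> {1..m}" "card I = l" "\<And>i. i \<in> I \<Longrightarrow> a i \<in> (A(j := A j - {x})) i"
  obtains i where "i \<in> I" "j \<notin> I - {i}" "a i \<lessdot> x"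
proof (cases "j \<in> I")
  case True
  then have "a j \<in> A j - {x}"
    using I(3)[OF True] by simp
  then show ?thesis
    using that[OF True] j(2) unfolding is_greatest_def by blast
next
  case False
  have a_in_A: "a i \<in> A i" if "i \<in> I" for i
    using I(3)[OF that] that False by (cases "i = j") auto
  have "\<exists>i\<in>I. a i \<noteq> x"
  proof (rule ccontr)
    assume "\<not> (\<exists>i\<in>I. a i \<noteq> x)"
    then have "insert j I \<subseteq> {i \<in> {1..m}. x \<in> A i}"
      using a_in_A I(1) j unfolding is_greatest_def by auto
    then have "card (insert j I) \<le> l"
      using rare card_mono[of "{i \<in> {1..m}. x \<in> A i}" "insert j I"] by simp
    moreover have "finite I"
      using I(1) finite_subset by blast
    ultimately show False
      using False I(2) by simp
  qed
  then obtain i where i: "i \<in> I" "a i \<noteq> x"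
    by blast
  have "I \<subset> nonempty_indices m A"
    using a_in_A I(1) j False unfolding is_greatest_def by blast
  then have "l < card (nonempty_indices m A)"
    using I(2) psubset_card_mono[of "nonempty_indices m A" I] by simp
  then have "a i \<lessdot> x"
    using greatest a_in_A i I(1) unfolding is_greatest_def by blast
  then show ?thesis
    using that[OF i(1)] False by blast
qed

lemma card_restricted_products_remove_greatest:
  fixes m :: nat
  assumes fin: "\<And>i. i \<in> {1..m} \<Longrightarrow> finite (A i)"
    and car: "\<And>i. i \<in> {1..m} \<Longrightarrow> A i \<subseteq> carrier G"
    and j: "j \<in> {1..m}" "is_greatest (A j) x"
    and greatest: "l < card (nonempty_indices m A) \<Longrightarrow> is_greatest (\<Union>i\<in>{1..m}. A i) x"
    and rare: "card {i \<in> {1..m}. x \<in> A i} \<le> l"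
    and enough: "l \<le> card (nonempty_indices m (A(j := A j - {x})))"
  shows "card (restricted_products G l m (A(j := A j - {x}))) < card (restricted_products G l m A)"
proof -
  define B where "B = A(j := A j - {x})"
  have B: "\<And>i. i \<in> {1..m} \<Longrightarrow> B i \<subseteq> A i"
    unfolding B_def by simp
  have finB: "\<And>i. i \<in> {1..m} \<Longrightarrow> finite (B i)"
    using fin B finite_subset by metis
  have carB: "\<And>i. i \<in> {1..m} \<Longrightarrow> B i \<subseteq> carrier G"
    using car B by blast
  have finite: "finite (restricted_products G l m B)"
    by (intro finite_restricted_products finB carB)
  have carrier: "restricted_products G l m B \<subseteq> carrier G"
    by (intro restricted_products_subset_carrier carB)
  have nonempty: "restricted_products G l m B \<noteq> {}"
    using enough unfolding B_def by (rule restricted_products_nonempty)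
  obtain p where p: "is_greatest (restricted_products G l m B) p"
    using finite_has_greatest[OF finite nonempty carrier] by blast
  then obtain I a where Ia: "p = finprod G a I" "I \<subseteq> {1..m}" "card I = l" "\<And>i. i \<in> I \<Longrightarrow> a i \<in> B i"
    unfolding is_greatest_def restricted_products_def by blast
  obtain i where i: "i \<in> I" "j \<notin> I - {i}" "a i \<lessdot> x"
    using obtain_exchangeable_index[OF j greatest rare Ia(2,3)] Ia(4) unfolding B_def by blast
  define q where "q = finprod G (a(j := x)) (insert j (I - {i}))"
  have "finite I"
    using Ia(2) finite_subset by blast
  have "x \<in> carrier G"
    using j car unfolding is_greatest_def by blast
  have "a \<in> I \<rightarrow> carrier G"
    using Ia(2,4) B car by blast
  then have "p \<lessdot> q"
    unfolding Ia(1) q_def using \<open>finite I\<close> i \<open>x \<in> carrier G\<close> by (intro finprod_exchange_gless)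
  moreover have "q \<in> restricted_products G l m A"
    unfolding q_def
  proof (rule exchange_in_restricted_products)
    show "a k \<in> A k" if "k \<in> I" for k
      using B Ia(2) Ia(4)[OF that] that by blast
    show "x \<in> A j"
      using j(2) unfolding is_greatest_def by blast
  qed (use Ia(2,3) i(1,2) j(1) in auto)
  moreover have "q \<notin> restricted_products G l m B"
    using is_greatest_not_gless[OF p carrier] \<open>p \<lessdot> q\<close> by auto
  moreover have "restricted_products G l m B \<subseteq> restricted_products G l m A"
    by (intro restricted_products_mono B)
  ultimately have "restricted_products G l m B \<subset> restricted_products G l m A"
    by blast
  then show ?thesis
    unfolding B_def[symmetric] using fin car by (intro psubset_card_mono finite_restricted_products)
qed

lemma restricted_products_lower_bound_step:
  fixes m :: nat
  assumes fin: "\<And>i. i \<in> {1..m} \<Longrightarrow> finite (A i)"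
    and car: "\<And>i. i \<in> {1..m} \<Longrightarrow> A i \<subseteq> carrier G"
    and j: "j \<in> {1..m}" "is_greatest (A j) x"
    and greatest: "l < card (nonempty_indices m A) \<Longrightarrow> is_greatest (\<Union>i\<in>{1..m}. A i) x"
    and enough: "l \<le> card (nonempty_indices m (A(j := A j - {x})))"
    and bound: "(\<Sum>y\<in>(\<Union>i\<in>{1..m}. (A(j := A j - {x})) i). mult_mu l m (A(j := A j - {x})) y) + 1
                  \<le> card (restricted_products G l m (A(j := A j - {x}))) + l"
  shows "(\<Sum>y\<in>(\<Union>i\<in>{1..m}. A i). mult_mu l m A y) + 1 \<le> card (restricted_products G l m A) + l"
proof -
  have "x \<in> A j"
    using j(2) unfolding is_greatest_def by blast
  then have count: "(\<Sum>y\<in>(\<Union>i\<in>{1..m}. A i). mult_mu l m A y)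
      \<le> (\<Sum>y\<in>(\<Union>i\<in>{1..m}. (A(j := A j - {x})) i). mult_mu l m (A(j := A j - {x})) y)
        + (if card {i \<in> {1..m}. x \<in> A i} \<le> l then 1 else 0)"
    using fin j(1) by (intro sum_mult_mu_remove_occurrence)
  show ?thesis
  proof (cases "card {i \<in> {1..m}. x \<in> A i} \<le> l")
    case True
    have "card (restricted_products G l m (A(j := A j - {x}))) < card (restricted_products G l m A)"
      using fin car j greatest True enough by (rule card_restricted_products_remove_greatest)
    then show ?thesis
      using bound count[unfolded if_P[OF True]] by linarith
  next
    case False
    have "card (restricted_products G l m (A(j := A j - {x}))) \<le> card (restricted_products G l m A)"
      using fin car by (intro card_mono finite_restricted_products restricted_products_mono) auto
    then show ?thesis
      using bound count[unfolded if_not_P[OF False]] by linarith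
  qed
qed

theorem restricted_products_lower_bound:
  fixes m :: nat
  assumes "\<And>i. i \<in> {1..m} \<Longrightarrow> finite (A i)" "\<And>i. i \<in> {1..m} \<Longrightarrow> A i \<subseteq> carrier G"
    and "l \<le> card (nonempty_indices m A)"
  shows "(\<Sum>x\<in>(\<Union>i\<in>{1..m}. A i). mult_mu l m A x) + 1 \<le> card (restricted_products G l m A) + l"
  using assms
proof (induction "\<Sum>i\<in>{1..m}. card (A i)" arbitrary: A rule: less_induct)
  case less
  note fin = less.prems(1) and car = less.prems(2) and enough = less.prems(3)
  have "restricted_products G l m A \<noteq> {}"
    using enough by (rule restricted_products_nonempty)
  moreover have "finite (restricted_products G l m A)"
    by (intro finite_restricted_products fin car)
  ultimately have "1 \<le> card (restricted_products G l m A)"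
    by (simp add: Suc_le_eq card_gt_0_iff)
  show ?case
  proof (cases "l < card (nonempty_indices m A) \<or> (\<exists>j\<in>{1..m}. 2 \<le> card (A j))")
    case False
    have "card (A i) \<le> 1" if "i \<in> {1..m}" for i
    proof -
      have "\<not> 2 \<le> card (A i)"
        using False that by blast
      then show ?thesis
        by linarith
    qed
    then have "(\<Sum>i\<in>{1..m}. card (A i)) \<le> card (nonempty_indices m A)"
      by (rule sum_card_le_card_nonempty_indices)
    moreover have "(\<Sum>x\<in>(\<Union>i\<in>{1..m}. A i). mult_mu l m A x) \<le> (\<Sum>i\<in>{1..m}. card (A i))"
      by (intro sum_mult_mu_le_sum_card fin)
    ultimately have "(\<Sum>x\<in>(\<Union>i\<in>{1..m}. A i). mult_mu l m A x) \<le> l"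
      using False enough by linarith
    then show ?thesis
      using \<open>1 \<le> card _\<close> by linarith
  next
    case True
    then obtain j x where j: "j \<in> {1..m}" "is_greatest (A j) x"
      and greatest: "l < card (nonempty_indices m A) \<Longrightarrow> is_greatest (\<Union>i\<in>{1..m}. A i) x"
      and enough': "l \<le> card (nonempty_indices m (A(j := A j - {x})))"
      using obtain_greatest_occurrence[of m A l] fin car enough by blast
    define B where "B = A(j := A j - {x})"
    have x: "x \<in> A j"
      using j(2) unfolding is_greatest_def by blast
    have "(\<Sum>i\<in>{1..m}. card (B i)) < (\<Sum>i\<in>{1..m}. card (A i))"
      unfolding B_def using fin j(1) x by (rule sum_card_remove_less)
    moreover have "\<And>i. i \<in> {1..m} \<Longrightarrow> finite (B i)" "\<And>i. i \<in> {1..m} \<Longrightarrow> B i \<subseteq> carrier G"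
      unfolding B_def using fin car by auto
    ultimately have "(\<Sum>y\<in>(\<Union>i\<in>{1..m}. B i). mult_mu l m B y) + 1
        \<le> card (restricted_products G l m B) + l"
      using enough' unfolding B_def[symmetric] by (rule less.hyps)
    with fin car j greatest enough' show ?thesis
      unfolding B_def by (rule restricted_products_lower_bound_step)
  qed
qed

lemma admissible_restricted_products_lower_bound:
  assumes "admissible_seq G m A" "l \<le> m"
  shows "(\<Sum>x\<in>(\<Union>j\<in>{1..m}. A j). mult_mu l m A x) + 1 \<le> card (restricted_products G l m A) + l"
proof (rule restricted_products_lower_bound)
  have "nonempty_indices m A = {1..m}"
    using assms(1) unfolding admissible_seq_def by auto
  then show "l \<le> card (nonempty_indices m A)"
    using assms(2) by simp
qed (use assms(1) in \<open>auto simp: admissible_seq_def\<close>)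

end

theorem corollary1p6:
  fixes G (structure) and l m :: nat
  assumes "comm_group G" and "torsion_free G" and "2 \<le> l" and "l \<le> m"
  shows "(\<forall>A. admissible_seq G m A \<longrightarrow>
            int (card (restricted_products G l m A))
              \<ge> int (\<Sum>x\<in>(\<Union>j\<in>{1..m}. A j). mult_mu l m A x) - int l + 1)
       \<and> (\<exists>A. admissible_seq G m A \<and>
            int (card (restricted_products G l m A))
              = int (\<Sum>x\<in>(\<Union>j\<in>{1..m}. A j). mult_mu l m A x) - int l + 1)"
proof -
  interpret comm_group G
    by fact
  obtain P where "ordered_comm_group G P"
    using torsion_free_imp_ordered \<open>torsion_free G\<close> by blast
  then interpret ordered_comm_group G P .
  have lower: "int (card (restricted_products G l m A))
                 \<ge> int (\<Sum>x\<in>(\<Union>j\<in>{1..m}. A j). mult_mu l m A x) - int l + 1"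
    if "admissible_seq G m A" for A
    using admissible_restricted_products_lower_bound[OF that \<open>l \<le> m\<close>] by linarith
  have "admissible_seq G m (\<lambda>j. {\<one>})"
    by (simp add: admissible_seq_def)
  moreover have "card (restricted_products G l m (\<lambda>j. {\<one>})) = 1"
    using \<open>l \<le> m\<close> by (simp add: restricted_products_const_singleton)
  moreover have "(\<Sum>x\<in>(\<Union>j\<in>{1..m}. {\<one>}). mult_mu l m (\<lambda>j. {\<one>}) x) = l"
    using assms(3,4) by (intro sum_mult_mu_const_singleton) auto
  ultimately show ?thesis
    using lower by (intro conjI allI impI exI[of _ "\<lambda>j. {\<one>}"]) auto
qed

end
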